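(* Let $n\ge1$ and let $H=[a_{ij}]\in M_n(\mathbb N)$ be a symmetric positive semidefinite matrix of nonnegative integers such that $\alpha_i:=a_{ii}\ge\max_{j\ne i}a_{ij}$ for every $1\le i\le n$. Let $$\mathcal{J}_H=\left\langle x_l^{\alpha_l},\ x_i^{\alpha_i-a_{ij}}x_j^{\alpha_j-a_{ij}} : 1\le l\le n,\ 1\le i<j\le n\right\rangle\subseteq R_n.$$ Then $\dim_{\mathbb K}\left(R_n/\mathcal{J}_H\right)\ge\det H$.
   Context: $\mathbb K$ is a field and $R_n=\mathbb K[x_1,\ldots,x_n]$; $\mathbb N$ denotes the nonnegative integers. $\dim_{\mathbb K}$ is the dimension as a $\mathbb K$-vector space (finite since all $x_l^{\alpha_l}$ lie in $\mathcal{J}_H$). *)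

theory Defs
  imports "HOL-Library.Poly_Mapping" "HOL-Library.Extended_Nat" "Jordan_Normal_Form.Determinant"
begin

text \<open>Multivariate polynomials over a field 'k: finitely supported maps from monomials
  (exponent vectors, nat =>0 nat) to coefficients, with the convolution product
  of HOL-Library.Poly_Mapping.  Variable x_i (1 \<le> i \<le> n in the paper) is index i-1 here.\<close>

type_synonym 'k mpoly = "(nat \<Rightarrow>\<^sub>0 nat) \<Rightarrow>\<^sub>0 'k"

definition Rn :: "nat \<Rightarrow> 'k::field mpoly set" where
  "Rn n = {p. \<forall>m \<in> Poly_Mapping.keys p. Poly_Mapping.keys m \<subseteq> {..<n}}"

definition csmult :: "'k::field \<Rightarrow> 'k mpoly \<Rightarrow> 'k mpoly" where
  "csmult c p = Poly_Mapping.single 0 c * p"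

definition ideal_gen :: "'k::field mpoly set \<Rightarrow> 'k mpoly set \<Rightarrow> 'k mpoly set" where
  "ideal_gen R G = {p. \<exists>F f. finite F \<and> F \<subseteq> G \<and> (\<forall>g\<in>F. f g \<in> R) \<and> p = (\<Sum>g\<in>F. f g * g)}"

text \<open>A finite set S is K-linearly independent modulo J (i.e. its image in the quotient
  is linearly independent).\<close>
definition lin_indep_mod :: "'k::field mpoly set \<Rightarrow> 'k mpoly set \<Rightarrow> bool" where
  "lin_indep_mod J S \<longleftrightarrow> (\<forall>c. (\<Sum>s\<in>S. csmult (c s) s) \<in> J \<longrightarrow> (\<forall>s\<in>S. c s = 0))"

text \<open>dim_K (R/J): supremum of sizes of finite subsets of R linearly independent modulo J.\<close>
definition quot_dim :: "'k::field mpoly set \<Rightarrow> 'k mpoly set \<Rightarrow> enat" where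
  "quot_dim R J = (SUP S \<in> {S. finite S \<and> S \<subseteq> R \<and> lin_indep_mod J S}. enat (card S))"

definition mono :: "(nat \<Rightarrow>\<^sub>0 nat) \<Rightarrow> 'k::field mpoly" where
  "mono m = Poly_Mapping.single m 1"

definition JH_gens :: "nat \<Rightarrow> (nat \<Rightarrow> nat \<Rightarrow> nat) \<Rightarrow> 'k::field mpoly set" where
  "JH_gens n a =
     {mono (Poly_Mapping.single l (a l l)) | l. l < n} \<union>
     {mono (Poly_Mapping.single i (a i i - a i j) + Poly_Mapping.single j (a j j - a i j)) | i j.
        i < j \<and> j < n}"

definition psd :: "nat \<Rightarrow> (nat \<Rightarrow> nat \<Rightarrow> nat) \<Rightarrow> bool" where
  "psd n a \<longleftrightarrow> (\<forall>x :: nat \<Rightarrow> real. 0 \<le> (\<Sum>i<n. \<Sum>j<n. x i * real (a i j) * x j))"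

end

theory Submission
  imports Defs
begin

text \<open>
  For y with 1 \<le> y i \<le> a i i and a i j < max (y i) (y j) whenever i \<noteq> j, the monomial
  x^(\<alpha> - y) is divisible by no generator of the monomial ideal J_H, so these monomials are
  linearly independent modulo J_H, and it suffices to show that det H is at most the
  number of such y.

  This is proved by induction on the trace, carrying 0 \<le> det H along. If some
  a i i \<ge> 2 strictly dominates its row, let H' be H with a i i lowered by one and H''
  be H with row and column i replaced by those of the identity. Expanding along row i
  gives det H = det H' + det H'', and splitting the vectors y by whether y i = a i i
  splits the count the same way. H'' is again positive semidefinite. If det H'' = 0,
  a kernel vector of H'' is isotropic for H, hence in its kernel, and det H = 0. If
  det H'' > 0, the i-th adjugate column c satisfies c^T H c = det H'' det H, so
  det H \<ge> 0; moreover H' is positive semidefinite when det H' \<ge> 0, and when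
  det H' < 0 the bound for H'' alone suffices. If no row can be reduced, H is the
  identity, or it has a zero diagonal entry or indices i \<noteq> j with
  a i j = a i i = a j j, and then again an isotropic vector forces det H = 0.
\<close>

section \<open>Quadratic forms\<close>

definition bilin :: "nat \<Rightarrow> (nat \<Rightarrow> nat \<Rightarrow> real) \<Rightarrow> (nat \<Rightarrow> real) \<Rightarrow> (nat \<Rightarrow> real) \<Rightarrow> real" where
  "bilin n k x y = (\<Sum>i<n. \<Sum>j<n. x i * k i j * y j)"

lemma bilin_altdef: "bilin n k x y = (\<Sum>i<n. x i * (\<Sum>j<n. k i j * y j))"
  unfolding bilin_def by (simp add: sum_distrib_left mult.assoc)

lemma bilin_add_left: "bilin n k (\<lambda>p. x p + y p) z = bilin n k x z + bilin n k y z"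
  unfolding bilin_def by (simp add: algebra_simps sum.distrib)

lemma bilin_add_right: "bilin n k z (\<lambda>p. x p + y p) = bilin n k z x + bilin n k z y"
  unfolding bilin_def by (simp add: algebra_simps sum.distrib)

lemma bilin_scale_left: "bilin n k (\<lambda>p. u * x p) z = u * bilin n k x z"
  unfolding bilin_def by (simp add: algebra_simps sum_distrib_left)

lemma bilin_scale_right: "bilin n k z (\<lambda>p. u * x p) = u * bilin n k z x"
  unfolding bilin_def by (simp add: algebra_simps sum_distrib_left)

lemmas bilin_linear = bilin_add_left bilin_add_right bilin_scale_left bilin_scale_right

lemma bilin_commute:
  assumes "\<forall>i<n. \<forall>j<n. k i j = k j i"
  shows "bilin n k x y = bilin n k y x"
  unfolding bilin_def using assms
  by (subst sum.swap) (auto intro!: sum.cong simp: mult_ac)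

lemma bilin_unit_left:
  "i < n \<Longrightarrow> bilin n k (\<lambda>p. if p = i then 1 else 0) y = (\<Sum>j<n. k i j * y j)"
  unfolding bilin_altdef by (simp add: if_distrib[where f="\<lambda>u. u * _"] cong: if_cong)

lemma bilin_unit_unit:
  "i < n \<Longrightarrow> j < n \<Longrightarrow>
     bilin n k (\<lambda>p. if p = i then 1 else 0) (\<lambda>p. if p = j then 1 else 0) = k i j"
  by (simp add: bilin_unit_left if_distrib[where f="\<lambda>u. _ * u"] cong: if_cong)

lemma bilin_column:
  assumes "i < n" and "\<forall>p<n. (\<Sum>q<n. k p q * c q) = (if p = i then d else 0)"
  shows "bilin n k z c = z i * d"
  using assms by (simp add: bilin_altdef if_distrib[where f="\<lambda>u. _ * u"] cong: if_cong)

lemma bilin_cong_off_diag: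
  assumes "w i = 0" and "\<forall>p q. (p, q) \<noteq> (i, i) \<longrightarrow> k p q = k' p q"
  shows "bilin n k w w = bilin n k' w w"
  unfolding bilin_def using assms by (intro sum.cong refl) (metis mult_zero_right prod.inject)

lemma psd_iff_bilin: "psd n b \<longleftrightarrow> (\<forall>x. 0 \<le> bilin n (\<lambda>i j. real (b i j)) x x)"
  by (simp add: psd_def bilin_def)

lemma linear_coeff_zero_if_quadratic_nonneg:
  fixes g h :: real
  assumes "\<And>t. 0 \<le> 2 * t * g + t\<^sup>2 * h"
  shows "g = 0"
proof -
  define s where "s = \<bar>h\<bar> + 1"
  have "s > 0" unfolding s_def by simp
  have "0 \<le> (2 * (- g / s) * g + (- g / s)\<^sup>2 * h) * s\<^sup>2"
    using assms[of "- g / s"] by simp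
  also have "\<dots> \<le> (2 * (- g / s) * g + (- g / s)\<^sup>2 * \<bar>h\<bar>) * s\<^sup>2"
    by (intro mult_right_mono add_left_mono mult_left_mono) auto
  also have "\<dots> = g\<^sup>2 * (\<bar>h\<bar> - 2 * s)"
    using \<open>s > 0\<close> by (simp add: field_simps power2_eq_square)
  also have "\<dots> = - g\<^sup>2 * (\<bar>h\<bar> + 2)"
    unfolding s_def by (simp add: algebra_simps)
  finally have "g\<^sup>2 * (\<bar>h\<bar> + 2) \<le> 0" by simp
  then show "g = 0"
    by (auto simp: mult_le_0_iff)
qed

lemma kernel_if_isotropic:
  assumes nonneg: "\<And>z. 0 \<le> bilin n k z z" and sym: "\<forall>i<n. \<forall>j<n. k i j = k j i"
    and isotropic: "bilin n k x x = 0" and "p < n"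
  shows "(\<Sum>j<n. k p j * x j) = 0"
proof (rule linear_coeff_zero_if_quadratic_nonneg)
  let ?e = "\<lambda>q. if q = p then 1 else 0 :: real"
  fix t
  have ee: "bilin n k ?e ?e = k p p" using bilin_unit_unit[OF \<open>p < n\<close> \<open>p < n\<close>] .
  have ex: "bilin n k ?e x = (\<Sum>j<n. k p j * x j)" using bilin_unit_left[OF \<open>p < n\<close>] .
  have xe: "bilin n k x ?e = (\<Sum>j<n. k p j * x j)" using ex bilin_commute[OF sym] by metis
  have "0 \<le> bilin n k (\<lambda>q. x q + t * ?e q) (\<lambda>q. x q + t * ?e q)"
    by (rule nonneg)
  also have "\<dots> = bilin n k x x + t * bilin n k ?e x + t * bilin n k x ?e + t * (t * bilin n k ?e ?e)"
    by (simp only: bilin_linear)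
  also have "\<dots> = 2 * t * (\<Sum>j<n. k p j * x j) + t\<^sup>2 * k p p"
    by (simp add: ee ex xe isotropic power2_eq_square)
  finally show "0 \<le> 2 * t * (\<Sum>j<n. k p j * x j) + t\<^sup>2 * k p p" .
qed

section \<open>Determinants of natural-number matrices\<close>

definition nat_mat :: "nat \<Rightarrow> (nat \<Rightarrow> nat \<Rightarrow> nat) \<Rightarrow> int mat" where
  "nat_mat n b = mat n n (\<lambda>(i, j). int (b i j))"

lemma nat_mat_carrier [simp]: "nat_mat n b \<in> carrier_mat n n"
  by (simp add: nat_mat_def)

lemma index_nat_mat [simp]: "i < n \<Longrightarrow> j < n \<Longrightarrow> nat_mat n b $$ (i, j) = int (b i j)"
  by (simp add: nat_mat_def)

definition sym_mat :: "nat \<Rightarrow> (nat \<Rightarrow> nat \<Rightarrow> nat) \<Rightarrow> bool" where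
  "sym_mat n b \<longleftrightarrow> (\<forall>i<n. \<forall>j<n. b i j = b j i)"

definition diag_dominant :: "nat \<Rightarrow> (nat \<Rightarrow> nat \<Rightarrow> nat) \<Rightarrow> bool" where
  "diag_dominant n b \<longleftrightarrow> (\<forall>i<n. \<forall>j<n. j \<noteq> i \<longrightarrow> b i j \<le> b i i)"

lemma det_nat_mat_eq_0_if_isotropic:
  fixes v :: "nat \<Rightarrow> int"
  assumes "sym_mat n b" "psd n b"
    and isotropic: "bilin n (\<lambda>i j. real (b i j)) (\<lambda>p. of_int (v p)) (\<lambda>p. of_int (v p)) = 0"
    and "k < n" "v k \<noteq> 0"
  shows "det (nat_mat n b) = 0"
proof -
  have "(\<Sum>q<n. int (b p q) * v q) = 0" if "p < n" for p
  proof -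
    have "(\<Sum>q<n. real (b p q) * of_int (v q)) = 0"
      by (rule kernel_if_isotropic[OF _ _ isotropic \<open>p < n\<close>])
        (use assms(1,2) in \<open>auto simp: psd_iff_bilin sym_mat_def\<close>)
    then have "real_of_int (\<Sum>q<n. int (b p q) * v q) = 0" by simp
    then show ?thesis by (simp only: of_int_eq_0_iff)
  qed
  then have "nat_mat n b *\<^sub>v vec n v = 0\<^sub>v n"
    by (auto intro!: eq_vecI simp: nat_mat_def scalar_prod_def atLeast0LessThan)
  moreover have "vec n v \<noteq> 0\<^sub>v n"
    using assms(4,5) by (metis index_vec index_zero_vec(1))
  ultimately show ?thesis
    by (meson det_0_iff_vec_prod_zero nat_mat_carrier vec_carrier)
qed

lemma sum_mult_cofactor:
  assumes "A \<in> carrier_mat n n" "i < n" "p < n"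
  shows "(\<Sum>q<n. A $$ (p, q) * cofactor A i q) = (if p = i then det A else 0)"
proof -
  have "(\<Sum>q<n. A $$ (p, q) * cofactor A i q) = (A * adj_mat A) $$ (p, i)"
    using assms adj_mat(1)[OF assms(1)]
    by (auto simp: scalar_prod_def atLeast0LessThan adj_mat_def intro!: sum.cong)
  also have "\<dots> = (if p = i then det A else 0)"
    using assms adj_mat(2)[OF assms(1)] by simp
  finally show ?thesis .
qed

lemma cofactor_cong:
  assumes "A \<in> carrier_mat n n" "B \<in> carrier_mat n n"
    and "\<forall>p<n. \<forall>q<n. p \<noteq> i \<longrightarrow> q \<noteq> j \<longrightarrow> A $$ (p, q) = B $$ (p, q)"
  shows "cofactor A i j = cofactor B i j"
proof -
  have "mat_delete A i j = mat_delete B i j"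
    using assms unfolding mat_delete_def by (intro eq_matI) (auto simp: Suc_lessI)
  then show ?thesis unfolding cofactor_def by simp
qed

definition dec_diag :: "(nat \<Rightarrow> nat \<Rightarrow> nat) \<Rightarrow> nat \<Rightarrow> nat \<Rightarrow> nat \<Rightarrow> nat" where
  "dec_diag b i p q = (if p = i \<and> q = i then b i i - 1 else b p q)"

definition unit_row_col :: "(nat \<Rightarrow> nat \<Rightarrow> nat) \<Rightarrow> nat \<Rightarrow> nat \<Rightarrow> nat \<Rightarrow> nat" where
  "unit_row_col b i p q = (if p = i \<or> q = i then (if p = q then 1 else 0) else b p q)"

lemma cofactor_dec_diag:
  "cofactor (nat_mat n (dec_diag b i)) i j = cofactor (nat_mat n b) i j"
  by (rule cofactor_cong[of _ n]) (auto simp: dec_diag_def)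

lemma det_nat_mat_row:
  "i < n \<Longrightarrow> det (nat_mat n b) = (\<Sum>j<n. int (b i j) * cofactor (nat_mat n b) i j)"
  using laplace_expansion_row[OF nat_mat_carrier] by simp

lemma det_unit_row_col:
  assumes "i < n"
  shows "det (nat_mat n (unit_row_col b i)) = cofactor (nat_mat n b) i i"
proof -
  have "det (nat_mat n (unit_row_col b i))
      = (\<Sum>j<n. if j = i then cofactor (nat_mat n (unit_row_col b i)) i i else 0)"
    unfolding det_nat_mat_row[OF assms] by (intro sum.cong) (auto simp: unit_row_col_def)
  also have "\<dots> = cofactor (nat_mat n (unit_row_col b i)) i i"
    using assms by simp
  also have "\<dots> = cofactor (nat_mat n b) i i"
    by (rule cofactor_cong[of _ n]) (auto simp: unit_row_col_def)
  finally show ?thesis .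
qed

lemma det_dec_diag_add_unit_row_col:
  assumes "i < n" "1 \<le> b i i"
  shows "det (nat_mat n b) = det (nat_mat n (dec_diag b i)) + det (nat_mat n (unit_row_col b i))"
proof -
  have "det (nat_mat n b) = (\<Sum>j<n. int (dec_diag b i i j) * cofactor (nat_mat n b) i j
                      + (if j = i then cofactor (nat_mat n b) i i else 0))"
    unfolding det_nat_mat_row[OF assms(1)] using assms(2)
    by (intro sum.cong refl) (simp add: dec_diag_def of_nat_diff left_diff_distrib)
  also have "\<dots> = det (nat_mat n (dec_diag b i)) + cofactor (nat_mat n b) i i"
    unfolding det_nat_mat_row[OF assms(1), of "dec_diag b i"] cofactor_dec_diag
    using assms(1) by (simp add: sum.distrib)
  finally show ?thesis using det_unit_row_col[OF assms(1)] by simp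
qed

lemma sym_mat_dec_diag: "sym_mat n b \<Longrightarrow> sym_mat n (dec_diag b i)"
  unfolding sym_mat_def dec_diag_def by auto

lemma sym_mat_unit_row_col: "sym_mat n b \<Longrightarrow> sym_mat n (unit_row_col b i)"
  unfolding sym_mat_def unit_row_col_def by auto

lemma diag_dominant_dec_diag:
  "diag_dominant n b \<Longrightarrow> \<forall>j<n. j \<noteq> i \<longrightarrow> b i j < b i i \<Longrightarrow> diag_dominant n (dec_diag b i)"
  unfolding diag_dominant_def dec_diag_def by auto

lemma diag_dominant_unit_row_col: "diag_dominant n b \<Longrightarrow> diag_dominant n (unit_row_col b i)"
  unfolding diag_dominant_def unit_row_col_def by auto

lemma trace_dec_diag_less:
  "i < n \<Longrightarrow> 1 \<le> b i i \<Longrightarrow> (\<Sum>j<n. dec_diag b i j j) < (\<Sum>j<n. b j j)"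
  by (intro sum_strict_mono_ex1) (auto simp: dec_diag_def)

lemma trace_unit_row_col_less:
  "i < n \<Longrightarrow> 2 \<le> b i i \<Longrightarrow> (\<Sum>j<n. unit_row_col b i j j) < (\<Sum>j<n. b j j)"
  by (intro sum_strict_mono_ex1) (auto simp: unit_row_col_def)

lemma psd_unit_row_col:
  assumes "i < n" "psd n b"
  shows "psd n (unit_row_col b i)"
  unfolding psd_def
proof
  fix x :: "nat \<Rightarrow> real"
  let ?x = "x(i := 0)"
  have "(\<Sum>p<n. \<Sum>q<n. x p * real (unit_row_col b i p q) * x q)
      = (\<Sum>p<n. \<Sum>q<n. ?x p * real (b p q) * ?x q + (if q = i \<and> p = i then x i * x i else 0))"
    by (intro sum.cong refl) (auto simp: unit_row_col_def)
  also have "\<dots> = (\<Sum>p<n. \<Sum>q<n. ?x p * real (b p q) * ?x q) + x i * x i"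
    using assms(1) by (simp add: sum.distrib sum.delta' flip: if_if_eq_conj cong: if_cong)
  finally have "(\<Sum>p<n. \<Sum>q<n. x p * real (unit_row_col b i p q) * x q)
      = (\<Sum>p<n. \<Sum>q<n. ?x p * real (b p q) * ?x q) + x i * x i" .
  moreover have "0 \<le> (\<Sum>p<n. \<Sum>q<n. ?x p * real (b p q) * ?x q)"
    using assms(2) unfolding psd_def by blast
  ultimately show "0 \<le> (\<Sum>p<n. \<Sum>q<n. x p * real (unit_row_col b i p q) * x q)"
    by simp
qed

lemma sum_nat_mat_cofactor:
  assumes "i < n" "p < n"
  shows "(\<Sum>q<n. real (b p q) * of_int (cofactor (nat_mat n b) i q))
       = (if p = i then of_int (det (nat_mat n b)) else 0)"
proof -
  have "(\<Sum>q<n. int (b p q) * cofactor (nat_mat n b) i q) = (if p = i then det (nat_mat n b) else 0)"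
    using sum_mult_cofactor[OF nat_mat_carrier assms] assms(2) by simp
  then have "real_of_int (\<Sum>q<n. int (b p q) * cofactor (nat_mat n b) i q)
      = real_of_int (if p = i then det (nat_mat n b) else 0)"
    by (rule arg_cong)
  then show ?thesis by simp
qed

lemma det_nonneg_if_cofactor_pos:
  assumes "psd n b" "i < n" "0 < cofactor (nat_mat n b) i i"
  shows "0 \<le> det (nat_mat n b)"
proof -
  define c where "c q = real_of_int (cofactor (nat_mat n b) i q)" for q
  have "0 \<le> bilin n (\<lambda>p q. real (b p q)) c c"
    using assms(1) by (simp add: psd_iff_bilin)
  also have "\<dots> = c i * real_of_int (det (nat_mat n b))"
    by (rule bilin_column[OF assms(2)]) (simp add: c_def sum_nat_mat_cofactor[OF assms(2)])
  finally show ?thesis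
    using assms(3) unfolding c_def by (simp add: zero_le_mult_iff)
qed

lemma isotropic_if_kernel_off_row:
  fixes x :: "nat \<Rightarrow> int"
  assumes "x i = 0" and ker: "\<And>p. p < n \<Longrightarrow> p \<noteq> i \<Longrightarrow> (\<Sum>q<n. int (b p q) * x q) = 0"
  shows "bilin n (\<lambda>p q. real (b p q)) (\<lambda>p. of_int (x p)) (\<lambda>p. of_int (x p)) = 0"
proof -
  have "(\<Sum>p<n. x p * (\<Sum>q<n. int (b p q) * x q)) = 0"
    using \<open>x i = 0\<close> ker by (intro sum.neutral) (metis lessThan_iff mult_eq_0_iff)
  then have "real_of_int (\<Sum>p<n. x p * (\<Sum>q<n. int (b p q) * x q)) = 0"
    by (simp only: of_int_0)
  then show ?thesis
    by (simp add: bilin_altdef)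
qed

lemma det_eq_0_if_unit_row_col_singular:
  assumes "sym_mat n b" "psd n b" "i < n" "det (nat_mat n (unit_row_col b i)) = 0"
  shows "det (nat_mat n b) = 0"
proof -
  obtain v where v: "v \<in> carrier_vec n" "v \<noteq> 0\<^sub>v n" "nat_mat n (unit_row_col b i) *\<^sub>v v = 0\<^sub>v n"
    using assms(4) det_0_iff_vec_prod_zero[OF nat_mat_carrier] by blast
  define x where "x p = v $ p" for p
  have row: "(\<Sum>q<n. int (unit_row_col b i p q) * x q) = 0" if "p < n" for p
    using arg_cong[OF v(3), of "\<lambda>w. w $ p"] that v(1)
    by (simp add: nat_mat_def scalar_prod_def atLeast0LessThan x_def)
  have "(\<Sum>q<n. int (unit_row_col b i i q) * x q) = (\<Sum>q<n. if q = i then x q else 0)"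
    by (intro sum.cong) (auto simp: unit_row_col_def)
  then have "x i = 0"
    using row[OF assms(3)] assms(3) by simp
  have "(\<Sum>q<n. int (b p q) * x q) = 0" if "p < n" "p \<noteq> i" for p
  proof -
    have "(\<Sum>q<n. int (b p q) * x q) = (\<Sum>q<n. int (unit_row_col b i p q) * x q)"
      using that(2) \<open>x i = 0\<close> by (intro sum.cong) (auto simp: unit_row_col_def)
    then show ?thesis using row[OF that(1)] by simp
  qed
  then have "bilin n (\<lambda>p q. real (b p q)) (\<lambda>p. of_int (x p)) (\<lambda>p. of_int (x p)) = 0"
    using isotropic_if_kernel_off_row \<open>x i = 0\<close> by blast
  moreover obtain k where "k < n" "x k \<noteq> 0"
    using v(1,2) unfolding x_def by (metis eq_vecI carrier_vecD index_zero_vec)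
  ultimately show ?thesis
    using det_nat_mat_eq_0_if_isotropic[OF assms(1,2)] by blast
qed

lemma psd_dec_diag:
  assumes sym: "sym_mat n b" and psd: "psd n b" and "i < n"
    and cof: "0 < cofactor (nat_mat n b) i i" and det: "0 \<le> det (nat_mat n (dec_diag b i))"
  shows "psd n (dec_diag b i)"
  unfolding psd_iff_bilin
proof
  fix z
  let ?k = "\<lambda>p q. real (dec_diag b i p q)"
  let ?d = "real_of_int (det (nat_mat n (dec_diag b i)))"
  define c where "c q = real_of_int (cofactor (nat_mat n (dec_diag b i)) i q)" for q
  have col: "\<forall>p<n. (\<Sum>q<n. ?k p q * c q) = (if p = i then ?d else 0)"
    unfolding c_def using sum_nat_mat_cofactor[OF \<open>i < n\<close>] by blast
  have symk: "\<forall>p<n. \<forall>q<n. ?k p q = ?k q p"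
    using sym_mat_dec_diag[OF sym] unfolding sym_mat_def by simp
  have ci: "0 < c i"
    using cof by (simp add: c_def cofactor_dec_diag)
  have zc: "bilin n ?k z c = z i * ?d" by (rule bilin_column[OF \<open>i < n\<close> col])
  have cz: "bilin n ?k c z = z i * ?d" using zc bilin_commute[OF symk] by metis
  have cc: "bilin n ?k c c = c i * ?d" by (rule bilin_column[OF \<open>i < n\<close> col])
  \<comment> \<open>w vanishes at i, where the two matrices differ, and is a combination of z and
    the adjugate column c, on which the decremented form is explicit.\<close>
  define w where "w p = c i * z p + (- z i) * c p" for p
  have "0 \<le> bilin n (\<lambda>p q. real (b p q)) w w"
    using psd by (simp add: psd_iff_bilin)
  also have "\<dots> = bilin n ?k w w"
    by (rule bilin_cong_off_diag) (auto simp: w_def dec_diag_def)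
  also have "\<dots> = (c i)\<^sup>2 * bilin n ?k z z - c i * (z i)\<^sup>2 * ?d"
    unfolding w_def bilin_linear zc cz cc by (simp add: power2_eq_square algebra_simps)
  finally have "c i * (z i)\<^sup>2 * ?d \<le> (c i)\<^sup>2 * bilin n ?k z z" by simp
  moreover have "0 \<le> c i * (z i)\<^sup>2 * ?d"
    using ci det by simp
  ultimately have "0 \<le> (c i)\<^sup>2 * bilin n ?k z z" by linarith
  then show "0 \<le> bilin n ?k z z"
    using ci by (simp add: zero_le_mult_iff)
qed

lemma det_eq_0_if_zero_diag:
  assumes "sym_mat n b" "psd n b" "i < n" "b i i = 0"
  shows "det (nat_mat n b) = 0"
proof (rule det_nat_mat_eq_0_if_isotropic[OF assms(1,2), of "\<lambda>p. if p = i then 1 else 0" i])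
  show "bilin n (\<lambda>p q. real (b p q))
      (\<lambda>p. of_int (if p = i then 1 else 0)) (\<lambda>p. of_int (if p = i then 1 else 0)) = 0"
    using bilin_unit_unit[OF assms(3) assms(3)] assms(4)
    by (simp add: if_distrib[where f=of_int] cong: if_cong)
qed (use assms(3) in simp_all)

lemma det_eq_0_if_twin_rows:
  assumes "sym_mat n b" "psd n b" "i < n" "j < n" "i \<noteq> j"
    and "b i j = b i i" "b j j = b i i"
  shows "det (nat_mat n b) = 0"
proof (rule det_nat_mat_eq_0_if_isotropic[OF assms(1,2),
    of "\<lambda>p. (if p = i then 1 else 0) - (if p = j then 1 else 0)" i])
  let ?e = "\<lambda>l p. if p = l then 1 else (0::real)"
  have v: "(\<lambda>p. real_of_int ((if p = i then 1 else 0) - (if p = j then 1 else 0)))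
      = (\<lambda>p. ?e i p + (- 1) * ?e j p)"
    by auto
  have "b j i = b i i"
    using assms(1,3,4,6) unfolding sym_mat_def by metis
  then show "bilin n (\<lambda>p q. real (b p q))
      (\<lambda>p. of_int ((if p = i then 1 else 0) - (if p = j then 1 else 0)))
      (\<lambda>p. of_int ((if p = i then 1 else 0) - (if p = j then 1 else 0))) = 0"
    unfolding v bilin_linear using assms(3-7) by (simp add: bilin_unit_unit)
qed (use assms(3,5) in simp_all)

section \<open>Counting standard vectors\<close>

text \<open>y \<in> std_vectors n a iff x^(\<alpha> - y) is a standard monomial of J_H, where \<alpha> p = a p p.\<close>
definition std_vectors :: "nat \<Rightarrow> (nat \<Rightarrow> nat \<Rightarrow> nat) \<Rightarrow> (nat \<Rightarrow> nat) set" where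
  "std_vectors n b = {y. (\<forall>p. n \<le> p \<longrightarrow> y p = 0) \<and> (\<forall>p<n. 1 \<le> y p \<and> y p \<le> b p p) \<and>
     (\<forall>p<n. \<forall>q<n. p \<noteq> q \<longrightarrow> b p q < max (y p) (y q))}"

lemma finite_std_vectors: "finite (std_vectors n b)"
proof -
  let ?F = "{y. \<forall>p. (p \<in> {..<n} \<longrightarrow> y p \<in> {..\<Sum>q<n. b q q}) \<and> (p \<notin> {..<n} \<longrightarrow> y p = 0)}"
  have "finite ?F"
    by (intro finite_set_of_finite_funs) simp_all
  moreover have "std_vectors n b \<subseteq> ?F"
    unfolding std_vectors_def by (auto intro: le_trans member_le_sum)
  ultimately show ?thesis
    by (rule finite_subset[rotated])
qed

lemma std_vectors_identity:
  assumes "\<forall>i<n. \<forall>j<n. b i j = (if i = j then 1 else 0)"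
  shows "std_vectors n b = {\<lambda>p. if p < n then 1 else 0}"
  using assms unfolding std_vectors_def by (auto simp: le_antisym)

lemma std_vectors_dec_diag_subset:
  assumes "i < n"
  shows "std_vectors n (dec_diag b i) \<subseteq> std_vectors n b"
  using assms unfolding std_vectors_def dec_diag_def by (auto split: if_splits)

lemma std_vectors_dec_diag_less:
  assumes "i < n" "1 \<le> b i i" "y \<in> std_vectors n (dec_diag b i)"
  shows "y i < b i i"
proof -
  have "y i \<le> dec_diag b i i i"
    using assms(1,3) unfolding std_vectors_def by blast
  then show ?thesis
    using assms(2) by (simp add: dec_diag_def)
qed

lemma std_vectors_dec_diagI:
  assumes "i < n" "y \<in> std_vectors n b" "y i \<noteq> b i i"
  shows "y \<in> std_vectors n (dec_diag b i)"
  using assms unfolding std_vectors_def dec_diag_def by auto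

lemma std_vectors_unit_row_col_at:
  assumes "i < n" "y \<in> std_vectors n (unit_row_col b i)"
  shows "y i = 1"
proof -
  have "1 \<le> y i \<and> y i \<le> unit_row_col b i i i"
    using assms unfolding std_vectors_def by blast
  then show ?thesis by (simp add: unit_row_col_def)
qed

lemma std_vectors_unit_row_colI:
  assumes "i < n" "y \<in> std_vectors n b"
  shows "y(i := 1) \<in> std_vectors n (unit_row_col b i)"
proof -
  have "unit_row_col b i p q < max ((y(i := 1)) p) ((y(i := 1)) q)"
    if "p < n" "q < n" "p \<noteq> q" for p q
  proof (cases "p = i \<or> q = i")
    case True
    then show ?thesis
      using that assms(2) unfolding std_vectors_def unit_row_col_def by (auto simp: less_max_iff_disj)
  next
    case False
    then show ?thesis
      using that assms(2) unfolding std_vectors_def unit_row_col_def by simp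
  qed
  moreover have "1 \<le> (y(i := 1)) p \<and> (y(i := 1)) p \<le> unit_row_col b i p p" if "p < n" for p
  proof -
    have "1 \<le> y p \<and> y p \<le> b p p"
      using assms(2) that unfolding std_vectors_def by blast
    then show ?thesis by (simp add: unit_row_col_def)
  qed
  moreover have "(y(i := 1)) p = 0" if "n \<le> p" for p
    using assms that unfolding std_vectors_def by simp
  ultimately show ?thesis
    unfolding std_vectors_def by blast
qed

lemma std_vectors_unit_row_colD:
  assumes "sym_mat n b" "i < n" "1 \<le> b i i" and strict: "\<forall>j<n. j \<noteq> i \<longrightarrow> b i j < b i i"
    and z: "z \<in> std_vectors n (unit_row_col b i)"
  shows "z(i := b i i) \<in> std_vectors n b"
proof -
  have "b p q < max ((z(i := b i i)) p) ((z(i := b i i)) q)"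
    if "p < n" "q < n" "p \<noteq> q" for p q
  proof (cases "p = i \<or> q = i")
    case True
    then show ?thesis
      using that strict assms(1) unfolding sym_mat_def by (auto simp: less_max_iff_disj)
  next
    case False
    have "unit_row_col b i p q < max (z p) (z q)"
      using z that unfolding std_vectors_def by blast
    then show ?thesis
      using False by (simp add: unit_row_col_def)
  qed
  moreover have "1 \<le> (z(i := b i i)) p \<and> (z(i := b i i)) p \<le> b p p" if "p < n" for p
  proof (cases "p = i")
    case False
    have "1 \<le> z p \<and> z p \<le> unit_row_col b i p p"
      using z that unfolding std_vectors_def by blast
    then show ?thesis
      using False by (simp add: unit_row_col_def)
  qed (use assms(3) in simp)
  moreover have "(z(i := b i i)) p = 0" if "n \<le> p" for p
    using z assms(2) that unfolding std_vectors_def by simp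
  ultimately show ?thesis
    unfolding std_vectors_def by blast
qed

lemma card_std_vectors_split:
  assumes "sym_mat n b" "i < n" "1 \<le> b i i" and strict: "\<forall>j<n. j \<noteq> i \<longrightarrow> b i j < b i i"
  shows "card (std_vectors n b)
       = card (std_vectors n (dec_diag b i)) + card (std_vectors n (unit_row_col b i))"
proof -
  let ?f = "\<lambda>y. y(i := b i i)"
  have "std_vectors n b \<subseteq> std_vectors n (dec_diag b i) \<union> ?f ` std_vectors n (unit_row_col b i)"
  proof
    fix y assume y: "y \<in> std_vectors n b"
    show "y \<in> std_vectors n (dec_diag b i) \<union> ?f ` std_vectors n (unit_row_col b i)"
    proof (cases "y i = b i i")
      case True
      then have "y = ?f (y(i := 1))" by (simp add: fun_upd_idem)
      then show ?thesis
        using std_vectors_unit_row_colI[OF assms(2) y] by (intro UnI2 rev_image_eqI)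
    qed (intro UnI1 std_vectors_dec_diagI[OF assms(2) y])
  qed
  moreover have "?f ` std_vectors n (unit_row_col b i) \<subseteq> std_vectors n b"
    using std_vectors_unit_row_colD[OF assms] by (rule image_subsetI)
  ultimately have "std_vectors n b = std_vectors n (dec_diag b i) \<union> ?f ` std_vectors n (unit_row_col b i)"
    using std_vectors_dec_diag_subset[OF assms(2)] by blast
  moreover have "std_vectors n (dec_diag b i) \<inter> ?f ` std_vectors n (unit_row_col b i) = {}"
    using std_vectors_dec_diag_less[of i n b, OF assms(2,3)] by fastforce
  moreover have "inj_on ?f (std_vectors n (unit_row_col b i))"
    by (rule inj_on_inverseI[where g="\<lambda>y. y(i := 1)"])
      (simp add: std_vectors_unit_row_col_at[OF assms(2)] fun_upd_idem)
  ultimately show ?thesis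
    by (simp add: card_Un_disjoint finite_std_vectors card_image)
qed

section \<open>The determinant bound\<close>

lemma det_le_card_identity:
  assumes "\<forall>i<n. \<forall>j<n. b i j = (if i = j then 1 else 0)"
  shows "0 \<le> det (nat_mat n b) \<and> det (nat_mat n b) \<le> int (card (std_vectors n b))"
proof -
  have "nat_mat n b = 1\<^sub>m n"
    using assms by (intro eq_matI) (auto simp: nat_mat_def)
  then show ?thesis
    using std_vectors_identity[OF assms] by simp
qed

lemma det_le_card_reduction:
  assumes sym: "sym_mat n b" and psd: "psd n b" and "i < n" "1 \<le> b i i"
    and strict: "\<forall>j<n. j \<noteq> i \<longrightarrow> b i j < b i i"
    and IH_unit: "0 \<le> det (nat_mat n (unit_row_col b i))
      \<and> det (nat_mat n (unit_row_col b i)) \<le> int (card (std_vectors n (unit_row_col b i)))"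
    and IH_dec: "psd n (dec_diag b i) \<Longrightarrow>
      det (nat_mat n (dec_diag b i)) \<le> int (card (std_vectors n (dec_diag b i)))"
  shows "0 \<le> det (nat_mat n b) \<and> det (nat_mat n b) \<le> int (card (std_vectors n b))"
proof -
  define D where "D = det (nat_mat n (unit_row_col b i))"
  define D' where "D' = det (nat_mat n (dec_diag b i))"
  have split: "det (nat_mat n b) = D' + D"
    unfolding D_def D'_def by (rule det_dec_diag_add_unit_row_col) fact+
  have card: "card (std_vectors n b)
      = card (std_vectors n (dec_diag b i)) + card (std_vectors n (unit_row_col b i))"
    by (rule card_std_vectors_split[OF sym \<open>i < n\<close> \<open>1 \<le> b i i\<close> strict])
  have cof: "cofactor (nat_mat n b) i i = D"
    unfolding D_def by (rule det_unit_row_col[OF \<open>i < n\<close>, symmetric])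
  consider "D = 0" | "0 < D"
    using IH_unit unfolding D_def by linarith
  then show ?thesis
  proof cases
    case 1
    then show ?thesis
      using det_eq_0_if_unit_row_col_singular[OF sym psd \<open>i < n\<close>] unfolding D_def by simp
  next
    case 2
    have "0 \<le> det (nat_mat n b)"
      using det_nonneg_if_cofactor_pos[OF psd \<open>i < n\<close>] cof 2 by simp
    moreover have "det (nat_mat n b) \<le> int (card (std_vectors n b))"
    proof (cases "0 \<le> D'")
      case True
      then have "psd n (dec_diag b i)"
        using psd_dec_diag[OF sym psd \<open>i < n\<close>] cof 2 unfolding D'_def by simp
      then show ?thesis
        using IH_dec IH_unit split card unfolding D_def D'_def by simp
    next
      case False
      then show ?thesis
        using IH_unit split card unfolding D_def by simp
    qed
    ultimately show ?thesis ..
  qed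
qed

lemma ex_max_lessThan:
  fixes f :: "nat \<Rightarrow> 'a::linorder"
  assumes "0 < n"
  obtains m where "m < n" "\<forall>i<n. f i \<le> f m"
proof -
  have "Max (f ` {..<n}) \<in> f ` {..<n}"
    using assms by (intro Max_in) auto
  then obtain m where "m < n" "Max (f ` {..<n}) = f m" by auto
  moreover have "\<forall>i<n. f i \<le> Max (f ` {..<n})" by simp
  ultimately show thesis using that by simp
qed

lemma reducible_or_twin_at_max_diag:
  assumes sym: "sym_mat n b" and dom: "diag_dominant n b"
    and "m < n" and max: "\<forall>i<n. b i i \<le> b m m"
  obtains (reducible) "\<forall>j<n. j \<noteq> m \<longrightarrow> b m j < b m m"
    | (twin_rows) j where "j < n" "j \<noteq> m" "b m j = b m m" "b j j = b m m"
proof (cases "\<forall>j<n. j \<noteq> m \<longrightarrow> b m j < b m m")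
  case False
  then obtain j where j: "j < n" "j \<noteq> m" "b m m \<le> b m j" by (auto simp: not_less)
  have "b m j \<le> b m m" "b j m \<le> b j j"
    using dom j(1,2) \<open>m < n\<close> unfolding diag_dominant_def by auto
  moreover have "b j m = b m j"
    using sym j(1) \<open>m < n\<close> unfolding sym_mat_def by blast
  moreover have "b j j \<le> b m m"
    using max j(1) by blast
  ultimately show thesis
    using twin_rows[OF j(1,2)] j(3) by simp
qed (rule reducible)

lemma diag_le_1_cases:
  assumes dom: "diag_dominant n b" and le_1: "\<forall>i<n. b i i \<le> 1"
  obtains (zero_diag) i where "i < n" "b i i = 0"
    | (twin_rows) i j where "i < n" "j < n" "i \<noteq> j" "b i j = b i i" "b j j = b i i"
    | (identity) "\<forall>i<n. \<forall>j<n. b i j = (if i = j then 1 else 0)"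
proof (cases "\<exists>i<n. b i i = 0")
  case False
  then have diag: "b i i = 1" if "i < n" for i
    using le_1 that by fastforce
  show thesis
  proof (cases "\<exists>i<n. \<exists>j<n. i \<noteq> j \<and> b i j \<noteq> 0")
    case True
    then obtain i j where ij: "i < n" "j < n" "i \<noteq> j" "b i j \<noteq> 0" by blast
    then have "b i j \<le> 1"
      using dom diag[OF \<open>i < n\<close>] unfolding diag_dominant_def by metis
    then show thesis
      using twin_rows[OF ij(1-3)] ij diag by simp
  next
    case False
    have "b i j = (if i = j then 1 else 0)" if "i < n" "j < n" for i j
      using False diag that by (cases "i = j") auto
    then show thesis using identity by blast
  qed
qed (use zero_diag in blast)

lemma diag_dominant_cases:
  assumes sym: "sym_mat n b" and dom: "diag_dominant n b"
  obtains (zero_diag) i where "i < n" "b i i = 0"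
    | (twin_rows) i j where "i < n" "j < n" "i \<noteq> j" "b i j = b i i" "b j j = b i i"
    | (reducible) i where "i < n" "2 \<le> b i i" "\<forall>j<n. j \<noteq> i \<longrightarrow> b i j < b i i"
    | (identity) "\<forall>i<n. \<forall>j<n. b i j = (if i = j then 1 else 0)"
proof (cases "n = 0")
  case False
  then obtain m where m: "m < n" "\<forall>i<n. b i i \<le> b m m"
    using ex_max_lessThan[of n "\<lambda>i. b i i"] by blast
  from sym dom m show thesis
  proof (cases rule: reducible_or_twin_at_max_diag)
    case reducible
    show thesis
    proof (cases "2 \<le> b m m")
      case True
      then show thesis using that(3) m(1) reducible by blast
    next
      case False
      then have "\<forall>i<n. b i i \<le> 1" using m(2) by fastforce
      with dom show thesis
        by (cases rule: diag_le_1_cases) (use that in blast)+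
    qed
  qed (use that(2) m(1) in blast)
qed (use that(4) in simp)

lemma det_le_card_std_vectors:
  assumes "sym_mat n b" "psd n b" "diag_dominant n b"
  shows "0 \<le> det (nat_mat n b) \<and> det (nat_mat n b) \<le> int (card (std_vectors n b))"
  using assms
proof (induction "\<Sum>i<n. b i i" arbitrary: b rule: less_induct)
  case less
  note sym = less.prems(1) and psd = less.prems(2) and dom = less.prems(3)
  from sym dom show ?case
  proof (cases rule: diag_dominant_cases)
    case (zero_diag i)
    then show ?thesis using det_eq_0_if_zero_diag[OF sym psd] by simp
  next
    case (twin_rows i j)
    then show ?thesis using det_eq_0_if_twin_rows[OF sym psd] by simp
  next
    case (reducible i)
    then have "1 \<le> b i i" by simp
    show ?thesis
    proof (rule det_le_card_reduction[OF sym psd \<open>i < n\<close> \<open>1 \<le> b i i\<close> reducible(3)])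
      show "0 \<le> det (nat_mat n (unit_row_col b i))
          \<and> det (nat_mat n (unit_row_col b i)) \<le> int (card (std_vectors n (unit_row_col b i)))"
        using reducible by (intro less.hyps trace_unit_row_col_less sym_mat_unit_row_col
            psd_unit_row_col diag_dominant_unit_row_col sym psd dom)
      show "det (nat_mat n (dec_diag b i)) \<le> int (card (std_vectors n (dec_diag b i)))"
        if "psd n (dec_diag b i)"
        using less.hyps[OF trace_dec_diag_less sym_mat_dec_diag[OF sym] that
            diag_dominant_dec_diag[OF dom reducible(3)]] reducible \<open>1 \<le> b i i\<close> by blast
    qed
  next
    case identity
    then show ?thesis by (rule det_le_card_identity)
  qed
qed

section \<open>Standard monomials\<close>

lemma keys_mono: "Poly_Mapping.keys (mono m :: 'k::field mpoly) = {m}"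
  unfolding mono_def by simp

lemma mono_eq_iff: "(mono m :: 'k::field mpoly) = mono m' \<longleftrightarrow> m = m'"
  unfolding mono_def by (metis lookup_single_eq lookup_single_not_eq one_neq_zero)

lemma lookup_csmult_mono:
  "Poly_Mapping.lookup (csmult c (mono m :: 'k::field mpoly)) m' = (if m = m' then c else 0)"
  unfolding csmult_def mono_def mult_single by (simp add: lookup_single when_def)

lemma lookup_ideal_gen_monomials:
  assumes "p \<in> ideal_gen R G" and gens: "\<forall>g\<in>G. \<exists>e. g = mono e \<and> (\<forall>k. m \<noteq> k + e)"
  shows "Poly_Mapping.lookup p m = 0"
proof -
  obtain F f where "F \<subseteq> G" and p: "p = (\<Sum>g\<in>F. f g * g)"
    using assms(1) unfolding ideal_gen_def by blast
  have "m \<notin> Poly_Mapping.keys (f g * g)" if g: "g \<in> F" for g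
  proof
    assume "m \<in> Poly_Mapping.keys (f g * g)"
    then obtain u v where "m = u + v" "v \<in> Poly_Mapping.keys g"
      using keys_mult[of "f g" g] by blast
    moreover obtain e where "g = mono e" "\<forall>k. m \<noteq> k + e"
      using gens \<open>F \<subseteq> G\<close> g by blast
    ultimately show False by (simp add: keys_mono)
  qed
  then have "m \<notin> Poly_Mapping.keys p"
    unfolding p using keys_sum[of "\<lambda>g. f g * g" F] by blast
  then show ?thesis by (simp add: in_keys_iff)
qed

lemma lin_indep_mod_monomials:
  assumes "finite M" and gens: "\<forall>m\<in>M. \<forall>g\<in>G. \<exists>e. g = mono e \<and> (\<forall>k. m \<noteq> k + e)"
  shows "lin_indep_mod (ideal_gen R G) (mono ` M :: 'k::field mpoly set)"
  unfolding lin_indep_mod_def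
proof (intro allI impI ballI)
  fix c and s :: "'k mpoly"
  assume J: "(\<Sum>s\<in>mono ` M. csmult (c s) s) \<in> ideal_gen R G" and "s \<in> mono ` M"
  then obtain m where "m \<in> M" and s: "s = mono m" by blast
  have "c s = (\<Sum>s'\<in>mono ` M. if s' = s then c s' else 0)"
    using \<open>s \<in> mono ` M\<close> \<open>finite M\<close> by (simp add: sum.delta')
  also have "\<dots> = Poly_Mapping.lookup (\<Sum>s\<in>mono ` M. csmult (c s) s) m"
    unfolding lookup_sum by (intro sum.cong) (auto simp: s lookup_csmult_mono mono_eq_iff)
  also have "\<dots> = 0"
    using lookup_ideal_gen_monomials[OF J] gens \<open>m \<in> M\<close> by blast
  finally show "c s = 0" .
qed

lemma quot_dim_ge_card:
  "finite S \<Longrightarrow> S \<subseteq> R \<Longrightarrow> lin_indep_mod J S \<Longrightarrow> enat (card S) \<le> quot_dim R J"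
  unfolding quot_dim_def by (rule SUP_upper) simp

lemma mono_in_Rn: "Poly_Mapping.keys m \<subseteq> {..<n} \<Longrightarrow> (mono m :: 'k::field mpoly) \<in> Rn n"
  unfolding Rn_def by (simp add: keys_mono)

definition std_exponent :: "nat \<Rightarrow> (nat \<Rightarrow> nat \<Rightarrow> nat) \<Rightarrow> (nat \<Rightarrow> nat) \<Rightarrow> (nat \<Rightarrow>\<^sub>0 nat)" where
  "std_exponent n a y = Abs_poly_mapping (\<lambda>p. if p < n then a p p - y p else 0)"

lemma lookup_std_exponent:
  "Poly_Mapping.lookup (std_exponent n a y) = (\<lambda>p. if p < n then a p p - y p else 0)"
proof -
  have "finite {p. (if p < n then a p p - y p else 0) \<noteq> 0}"
    by (rule finite_subset[of _ "{..<n}"]) auto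
  then show ?thesis
    unfolding std_exponent_def by (rule lookup_Abs_poly_mapping)
qed

lemma keys_std_exponent: "Poly_Mapping.keys (std_exponent n a y) \<subseteq> {..<n}"
  by (auto simp: in_keys_iff lookup_std_exponent split: if_splits)

lemma inj_on_std_exponent: "inj_on (std_exponent n a) (std_vectors n a)"
proof (rule inj_onI)
  fix y y' assume y: "y \<in> std_vectors n a" "y' \<in> std_vectors n a"
    and eq: "std_exponent n a y = std_exponent n a y'"
  show "y = y'"
  proof
    fix p
    show "y p = y' p"
    proof (cases "p < n")
      case True
      then have "a p p - y p = a p p - y' p" and "y p \<le> a p p" "y' p \<le> a p p"
        using arg_cong[OF eq, of "\<lambda>m. Poly_Mapping.lookup m p"] y
        unfolding lookup_std_exponent std_vectors_def by auto
      then show ?thesis by simp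
    next
      case False
      then show ?thesis using y unfolding std_vectors_def by simp
    qed
  qed
qed

lemma std_exponent_not_divisible:
  assumes y: "y \<in> std_vectors n a" and sym: "sym_mat n a" and dom: "diag_dominant n a"
    and "g \<in> JH_gens n a"
  shows "\<exists>e. g = mono e \<and> (\<forall>k. std_exponent n a y \<noteq> k + e)"
proof -
  have below: "Poly_Mapping.lookup e p \<le> a p p - y p"
    if "std_exponent n a y = k + e" "p < n" for k e p
    using arg_cong[OF that(1), of "\<lambda>m. Poly_Mapping.lookup m p"] that(2)
    by (simp add: lookup_std_exponent lookup_add)
  have y_bounds: "1 \<le> y p \<and> y p \<le> a p p" if "p < n" for p
    using y that unfolding std_vectors_def by blast
  from \<open>g \<in> JH_gens n a\<close> consider (power) l where "l < n" "g = mono (Poly_Mapping.single l (a l l))"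
    | (pair) i j where "i < j" "j < n"
        "g = mono (Poly_Mapping.single i (a i i - a i j) + Poly_Mapping.single j (a j j - a i j))"
    unfolding JH_gens_def by blast
  then show ?thesis
  proof cases
    case power
    show ?thesis
    proof (intro exI conjI allI notI)
      fix k assume "std_exponent n a y = k + Poly_Mapping.single l (a l l)"
      from below[OF this \<open>l < n\<close>] y_bounds[OF \<open>l < n\<close>] show False by simp linarith
    qed (fact power(2))
  next
    case pair
    then have "i < n" "i \<noteq> j" "j \<noteq> i" by auto
    show ?thesis
    proof (intro exI conjI allI notI)
      fix k
      assume split: "std_exponent n a y
        = k + (Poly_Mapping.single i (a i i - a i j) + Poly_Mapping.single j (a j j - a i j))"
      have "a i j \<le> a i i" "a j i \<le> a j j" "a j i = a i j"
        using dom sym \<open>i < n\<close> \<open>j < n\<close> \<open>i \<noteq> j\<close> unfolding diag_dominant_def sym_mat_def by auto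
      moreover have "a i i - a i j \<le> a i i - y i" "a j j - a i j \<le> a j j - y j"
        using below[OF split \<open>i < n\<close>] below[OF split \<open>j < n\<close>] \<open>i \<noteq> j\<close> \<open>j \<noteq> i\<close>
        by (simp_all add: lookup_add lookup_single)
      moreover have "a i j < max (y i) (y j)"
        using y \<open>i < n\<close> \<open>j < n\<close> \<open>i \<noteq> j\<close> unfolding std_vectors_def by blast
      ultimately show False
        using y_bounds[OF \<open>i < n\<close>] y_bounds[OF \<open>j < n\<close>] by linarith
    qed (fact pair(3))
  qed
qed

theorem theorem2:
  fixes n :: nat and a :: "nat \<Rightarrow> nat \<Rightarrow> nat"
  assumes "n \<ge> 1"
    and sym: "\<forall>i<n. \<forall>j<n. a i j = a j i"
    and "psd n a"
    and diag: "\<forall>i<n. \<forall>j<n. j \<noteq> i \<longrightarrow> a i j \<le> a i i"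
  shows "enat (nat (det (mat n n (\<lambda>(i, j). int (a i j)))))
           \<le> quot_dim (Rn n) (ideal_gen (Rn n) (JH_gens n a :: 'k::field mpoly set))"
proof -
  let ?S = "mono ` std_exponent n a ` std_vectors n a :: 'k mpoly set"
  have "sym_mat n a" "diag_dominant n a"
    using sym diag unfolding sym_mat_def diag_dominant_def by auto
  then have "det (nat_mat n a) \<le> int (card (std_vectors n a))"
    using det_le_card_std_vectors \<open>psd n a\<close> by blast
  moreover have "card ?S = card (std_vectors n a)"
    using inj_on_std_exponent by (simp add: card_image inj_on_def mono_eq_iff)
  ultimately have "enat (nat (det (mat n n (\<lambda>(i, j). int (a i j))))) \<le> enat (card ?S)"
    unfolding nat_mat_def by simp
  also have "\<dots> \<le> quot_dim (Rn n) (ideal_gen (Rn n) (JH_gens n a :: 'k mpoly set))"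
  proof (rule quot_dim_ge_card)
    show "finite ?S" by (simp add: finite_std_vectors)
    show "?S \<subseteq> Rn n" using mono_in_Rn[OF keys_std_exponent] by blast
    show "lin_indep_mod (ideal_gen (Rn n) (JH_gens n a)) ?S"
      using std_exponent_not_divisible \<open>sym_mat n a\<close> \<open>diag_dominant n a\<close>
      by (intro lin_indep_mod_monomials) (auto simp: finite_std_vectors)
  qed
  finally show ?thesis .
qed

end
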